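(* For every positive integer $r$ and indices $a_1,b_1,\dots,b_r\in\{1,\dots,n\}$, the following holds in $\mathcal{M}=\bar A/J$: $$\partial_{a_1}x^{b_1}x^{b_2}\cdots x^{b_r}+J=\sum_{c_2,\dots,c_r}S^{b_1b_2\cdots b_r}_{a_1c_2\cdots c_r}(H+r-1)\,x^{c_2}x^{c_3}\cdots x^{c_r}+J,$$ where $S$ is defined by $S_a^b(K)=\delta_a^b$ and, for $r\ge2$, $$S^{b_1\cdots b_r}_{a_1\cdots a_r}(K)=\delta^{b_1}_{a_1}\cdots\delta^{b_r}_{a_r}+\sum_tR^{b_1t}_{a_1a_2}(K-r+1)\,S^{b_2\cdots b_r}_{ta_3\cdots a_r}(K),$$ equivalently $S^{b_1\cdots b_r}_{a_1\cdots a_r}(H)=\delta^{b_1}_{a_1}\cdots\delta^{b_r}_{a_r}+R^{b_1c_2}_{a_1a_2}(H-r+1)\delta^{b_2}_{c_2}\delta^{b_3}_{a_3}\cdots\delta^{b_r}_{a_r}+R^{b_1c_2}_{a_1a_2}(H-r+1)R^{b_2c_3}_{c_2a_3}(H-r+2)\delta^{b_3}_{c_3}\delta^{b_4}_{a_4}\cdots\delta^{b_r}_{a_r}+\cdots+R^{b_1c_2}_{a_1a_2}(H-r+1)\cdots R^{b_{r-1}b_r}_{c_{r-1}a_r}(H-1)$ (summing over repeated indices).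
   Context: $W_\eta(2n)$ is the unital associative $\mathbb{C}$-algebra generated by $x^a,\partial_a$ ($a=1,\dots,n$) and central $\eta_{ab},\eta^{ab}$ with $x^ax^b=x^bx^a$, $\partial_a\partial_b=\partial_b\partial_a$, $\partial_ax^b-x^b\partial_a=\delta_a^b$, $\eta_{ab}=\eta_{ba}$, $\sum_b\eta_{ab}\eta^{bc}=\delta_a^c$; $n\ge3$. Repeated upper/lower indices are summed; $x_a=\eta_{ab}x^b$, $\partial^a=\eta^{ab}\partial_b$, $E=\frac i2\partial_a\partial^a$, $F=\frac i2x_ax^a$, $H=-\frac12(x^a\partial_a+\partial_ax^a)$. $A$ is the localization of $W_\eta(2n)$ at nonzero polynomials in $H$; $\mathrm{II}=AE+FA$; $\bar A=A/\mathrm{II}$ with product $\bar w\diamond\bar z=\overline{\sum_{k\ge0}\frac1{k!}(\operatorname{ad}F)^k(w)\psi_k(H)^{-1}(\operatorname{ad}E)^k(z)}$, $(\operatorname{ad}X)(y)=Xy-yX$, $\psi_0=1$, $\psi_k(H)=\prod_{j=1}^k(H+1+j-2k)$. In $\bar A$ bars are dropped and $\diamond$ is written as juxtaposition; elements $g(H)\in\mathbb{C}[\eta](H)$ are identified with their classes, and $x^a g(H)=g(H+1)x^a$, $\partial_a g(H)=g(H-1)\partial_a$ in $\bar A$. The rational dynamical $R$-matrix is $R^{bd}_{ac}(H)=\delta^b_c\delta^d_a+\eta_{ac}\eta^{bd}\frac1{H+1}$, so that $\partial_ax^b=\delta_a^b+R^{bd}_{ac}(H)x^c\partial_d$ in $\bar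 A$. $J=\sum_a\bar A\,\partial_a$ is the left ideal generated by the $\partial_a$, and $\mathcal{M}=\bar A/J$. *)

theory Defs
  imports Main
begin

definition kd :: "nat \<Rightarrow> nat \<Rightarrow> 'r::ring_1" where
  "kd i j = (if i = j then 1 else 0)"

text \<open>Two-sided inverse of a ring element (meaningful when it exists).\<close>
definition rinv :: "'r::ring_1 \<Rightarrow> 'r" where
  "rinv y = (THE z. y * z = 1 \<and> z * y = 1)"

text \<open>Rational dynamical R-matrix:
  R^{bd}_{ac}(K) = delta^b_c delta^d_a + eta_{ac} eta^{bd} (K+1)^{-1}.
  Arguments in the order b d a c.\<close>
definition Rmat :: "(nat \<Rightarrow> nat \<Rightarrow> 'r::ring_1) \<Rightarrow> (nat \<Rightarrow> nat \<Rightarrow> 'r) \<Rightarrow>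
    nat \<Rightarrow> nat \<Rightarrow> nat \<Rightarrow> nat \<Rightarrow> 'r \<Rightarrow> 'r" where
  "Rmat etal etau b d a c K = kd b c * kd d a + etal a c * etau b d * rinv (K + 1)"

text \<open>S^{b_1...b_r}_{a_1...a_r}(K), upper indices first (list bs), lower indices second (list as).
  For r = length bs + 2 the shift K - r + 1 equals K - (length bs + 1).\<close>
fun Smat :: "nat \<Rightarrow> (nat \<Rightarrow> nat \<Rightarrow> 'r::ring_1) \<Rightarrow> (nat \<Rightarrow> nat \<Rightarrow> 'r) \<Rightarrow>
    nat list \<Rightarrow> nat list \<Rightarrow> 'r \<Rightarrow> 'r" where
  "Smat n etal etau [b] [a] K = kd a b"
| "Smat n etal etau (b1 # b2 # bs) (a1 # a2 # as) K =
     prod_list (map (\<lambda>(a, b). kd a b) (zip (a1 # a2 # as) (b1 # b2 # bs)))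
     + (\<Sum>t\<in>{1..n}. Rmat etal etau b1 t a1 a2 (K - of_nat (length bs + 1))
                      * Smat n etal etau (b2 # bs) (t # as) K)"
| "Smat n etal etau _ _ K = 0"

end

(* Modulo the left ideal J generated by the d_a, move d_a to the right through the first
   factor with d_a x^b = delta + R(H) x^c d_e and reduce d_e x^{b_2}...x^{b_r} by induction.
   The resulting x^c must then be pushed left through the coefficients S(...): since
   x^c g(H) = g(H + 1) x^c, this raises their dynamical argument by one, and the
   recursion obtained for the coefficients is exactly the defining recursion of S.
   Only the relation for d_a x^b, the shift x^c H = (H + 1) x^c, invertibility of the
   H + k and centrality of eta are needed. *)
theory Submission
  imports Defs
begin

lemma kd_eq_of_bool: "kd a b = of_bool (a = b)"
  by (simp add: kd_def)

lemma prod_list_kd: "prod_list (map (\<lambda>(a, b). kd a b) zs) = of_bool (\<forall>(a, b)\<in>set zs. a = b)"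
  by (induction zs) (auto simp: kd_def)

lemma prod_list_kd_zip:
  "length as = length bs \<Longrightarrow> prod_list (map (\<lambda>(a, b). kd a b) (zip as bs)) = of_bool (as = bs)"
  by (simp add: prod_list_kd list_eq_iff_zip_eq)

lemma rinv_eqI:
  assumes "y * z = 1" "z * y = (1::'r::ring_1)"
  shows "rinv y = z"
  unfolding rinv_def
proof (rule the_equality)
  show "y * z = 1 \<and> z * y = 1" using assms by simp
  fix w assume w: "y * w = 1 \<and> w * y = 1"
  have "w = w * (y * z)" using assms by simp
  also have "\<dots> = (w * y) * z" by (simp only: mult.assoc)
  finally show "w = z" using w by simp
qed

lemma intertwine_inverse:
  fixes x a b a' b' :: "'r::ring_1"
  assumes "x * a = b * x" "a * a' = 1" "b' * b = 1"
  shows "x * a' = b' * x"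
proof -
  have "x * a' = b' * b * x * a'" using assms(3) by simp
  also have "\<dots> = b' * (x * a) * a'" using assms(1) by (simp only: mult.assoc)
  also have "\<dots> = b' * x * (a * a')" by (simp only: mult.assoc)
  finally show ?thesis using assms(2) by simp
qed

lemma Rmat_intertwine:
  fixes x K :: "'r::ring_1"
  assumes etal_central: "\<And>a c y. etal a c * y = y * etal a c"
    and etau_central: "\<And>b e y. etau b e * y = y * etau b e"
    and x_K: "x * K = (K + 1) * x"
    and inv1: "(K + 1) * rinv (K + 1) = 1"
    and inv2: "rinv (K + 2) * (K + 2) = 1"
  shows "x * Rmat etal etau b e a c K = Rmat etal etau b e a c (K + 1) * x"
proof -
  have "x * (K + 1) = (K + 1 + 1) * x"
    using x_K by (simp add: distrib_left distrib_right)
  also have "K + 1 + 1 = K + 2"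
    by (simp add: add.assoc)
  finally have "x * (K + 1) = (K + 2) * x" .
  then have x_rinv: "x * rinv (K + 1) = rinv (K + 2) * x"
    using inv1 inv2 by (rule intertwine_inverse)
  have eta: "x * (etal a c * etau b e * z) = etal a c * etau b e * (x * z)" for z
    by (metis etal_central etau_central mult.assoc)
  show ?thesis
    unfolding Rmat_def distrib_left distrib_right eta x_rinv
    by (simp add: kd_eq_of_bool add.assoc mult.assoc)
qed

lemma Smat_intertwine:
  fixes x K L :: "'r::ring_1"
  assumes x_Rmat: "\<And>L b e a c. L - K \<in> \<int> \<Longrightarrow>
      x * Rmat etal etau b e a c L = Rmat etal etau b e a c (L + 1) * x"
    and "L - K \<in> \<int>"
  shows "x * Smat n etal etau bs as L = Smat n etal etau bs as (L + 1) * x"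
  using assms
proof (induction n etal etau bs as L rule: Smat.induct)
  case (2 n etal etau b1 b2 bs a1 a2 as L)
  let ?R = "\<lambda>t L. Rmat etal etau b1 t a1 a2 L"
    and ?S = "\<lambda>t L. Smat n etal etau (b2 # bs) (t # as) L"
  define j :: 'r where "j = of_nat (length bs + 1)"
  have "L - j - K \<in> \<int>"
    using 2(3) unfolding j_def by (metis Ints_diff Ints_of_nat diff_right_commute)
  then have R: "x * ?R t (L - j) = ?R t (L + 1 - j) * x" for t
    using 2(2) by (simp add: diff_add_eq)
  have S: "x * ?S t L = ?S t (L + 1) * x" if "t \<in> {1..n}" for t
    using 2 that by blast
  have "x * (?R t (L - j) * ?S t L) = ?R t (L + 1 - j) * ?S t (L + 1) * x" if "t \<in> {1..n}" for t
    by (simp only: mult.assoc[symmetric] R) (simp only: mult.assoc S[OF that])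
  then have "(\<Sum>t\<in>{1..n}. x * (?R t (L - j) * ?S t L))
      = (\<Sum>t\<in>{1..n}. ?R t (L + 1 - j) * ?S t (L + 1) * x)"
    by (rule sum.cong[OF refl])
  then show ?case
    unfolding Smat.simps j_def[symmetric] distrib_left sum_distrib_left distrib_right sum_distrib_right
      prod_list_kd
    by simp
qed (simp_all add: kd_eq_of_bool)

lemma Smat_Cons_Cons_shifted:
  assumes "length cs = length bs"
  shows "Smat n etal etau (b1 # b2 # bs) (a1 # a2 # cs) (K + of_nat (Suc (length bs)))
    = of_bool (a1 # a2 # cs = b1 # b2 # bs)
      + (\<Sum>t\<in>{1..n}. Rmat etal etau b1 t a1 a2 K
          * Smat n etal etau (b2 # bs) (t # cs) (K + of_nat (Suc (length bs))))"
  unfolding Smat.simps using assms by (subst prod_list_kd_zip) simp_all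

definition left_ideal_gen :: "'i set \<Rightarrow> ('i \<Rightarrow> 'r::ring_1) \<Rightarrow> 'r set" where
  "left_ideal_gen A g = {u. \<exists>y. u = (\<Sum>a\<in>A. y a * g a)}"

lemma left_ideal_gen_generator:
  assumes "finite A" "a \<in> A"
  shows "g a \<in> left_ideal_gen A g"
  unfolding left_ideal_gen_def
  by (rule CollectI, rule exI[of _ "\<lambda>b. of_bool (b = a)"]) (simp add: assms if_distrib cong: if_cong)

lemma left_ideal_gen_zero: "0 \<in> left_ideal_gen A g"
  unfolding left_ideal_gen_def by (auto intro: exI[of _ "\<lambda>_. 0"])

lemma left_ideal_gen_add:
  assumes "u \<in> left_ideal_gen A g" "v \<in> left_ideal_gen A g"
  shows "u + v \<in> left_ideal_gen A g"
proof -
  obtain y z where "u = (\<Sum>a\<in>A. y a * g a)" "v = (\<Sum>a\<in>A. z a * g a)"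
    using assms unfolding left_ideal_gen_def by blast
  then show ?thesis
    unfolding left_ideal_gen_def
    by (auto intro: exI[of _ "\<lambda>a. y a + z a"] simp: distrib_right sum.distrib)
qed

lemma left_ideal_gen_left_mult:
  assumes "u \<in> left_ideal_gen A g"
  shows "w * u \<in> left_ideal_gen A g"
proof -
  obtain y where "u = (\<Sum>a\<in>A. y a * g a)"
    using assms unfolding left_ideal_gen_def by blast
  then show ?thesis
    unfolding left_ideal_gen_def
    by (auto intro: exI[of _ "\<lambda>a. w * y a"] simp: sum_distrib_left mult.assoc)
qed

lemma left_ideal_gen_sum:
  "(\<And>i. i \<in> I \<Longrightarrow> f i \<in> left_ideal_gen A g) \<Longrightarrow> sum f I \<in> left_ideal_gen A g"
  by (induction I rule: infinite_finite_induct) (auto intro: left_ideal_gen_zero left_ideal_gen_add)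

lemma sum_words_Suc:
  assumes "finite A"
  shows "(\<Sum>cs\<in>{cs. length cs = Suc m \<and> set cs \<subseteq> A}. f cs)
       = (\<Sum>c\<in>A. \<Sum>cs\<in>{cs. length cs = m \<and> set cs \<subseteq> A}. f (c # cs))"
proof -
  let ?W = "{cs. length cs = m \<and> set cs \<subseteq> A}"
  have words_Suc: "{cs. length cs = Suc m \<and> set cs \<subseteq> A} = (\<lambda>(c, cs). c # cs) ` (A \<times> ?W)"
    by (auto simp: length_Suc_conv image_iff)
  have "inj_on (\<lambda>(c, cs). c # cs) (A \<times> ?W)"
    by (auto simp: inj_on_def)
  moreover have "finite ?W"
    using finite_lists_length_eq[OF assms, of m] by (simp add: conj_commute)
  ultimately show ?thesis
    unfolding words_Suc by (simp add: sum.reindex sum.cartesian_product assms split_def)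
qed

locale dynamical_Weyl =
  fixes n :: nat and etal etau :: "nat \<Rightarrow> nat \<Rightarrow> 'r::ring_1" and x d :: "nat \<Rightarrow> 'r" and H :: 'r
  assumes etal_central: "\<And>a b y. etal a b * y = y * etal a b"
    and etau_central: "\<And>a b y. etau a b * y = y * etau a b"
    and H_shift_invertible: "\<And>k::int. \<exists>z. (H + of_int k) * z = 1 \<and> z * (H + of_int k) = 1"
    and x_H: "a \<in> {1..n} \<Longrightarrow> x a * H = (H + 1) * x a"
    and d_x: "a \<in> {1..n} \<Longrightarrow> b \<in> {1..n} \<Longrightarrow>
      d a * x b = kd a b + (\<Sum>c\<in>{1..n}. \<Sum>e\<in>{1..n}. Rmat etal etau b e a c H * x c * d e)"
begin

abbreviation words :: "nat \<Rightarrow> nat list set" where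
  "words m \<equiv> {cs. length cs = m \<and> set cs \<subseteq> {1..n}}"

lemma finite_words: "finite (words m)"
  using finite_lists_length_eq[of "{1..n}" m] by (simp add: conj_commute)

lemma shift_inverse:
  assumes "L - H \<in> \<int>"
  shows "L * rinv L = 1" "rinv L * L = 1"
proof -
  obtain k where "L - H = of_int k"
    using assms by (rule Ints_cases)
  then have L: "L = H + of_int k"
    by (simp add: diff_eq_eq add.commute)
  obtain z where z: "(H + of_int k) * z = 1" "z * (H + of_int k) = 1"
    using H_shift_invertible by blast
  then have "rinv L = z"
    unfolding L by (rule rinv_eqI)
  with z show "L * rinv L = 1" "rinv L * L = 1"
    unfolding L by simp_all
qed

lemma x_shift:
  assumes "c \<in> {1..n}" "L - H \<in> \<int>"
  shows "x c * L = (L + 1) * x c"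
proof -
  obtain k where "L - H = of_int k"
    using assms(2) by (rule Ints_cases)
  then have L: "L = H + of_int k"
    by (simp add: diff_eq_eq add.commute)
  have "x c * (H + of_int k) = (H + 1) * x c + of_int k * x c"
    using x_H[OF assms(1)] mult_of_int_commute[of k "x c"] by (simp add: distrib_left)
  then show ?thesis
    unfolding L by (simp add: distrib_right add_ac)
qed

lemma x_Rmat:
  assumes "c \<in> {1..n}" "L - H \<in> \<int>"
  shows "x c * Rmat etal etau b e a c' L = Rmat etal etau b e a c' (L + 1) * x c"
proof (rule Rmat_intertwine[OF etal_central etau_central x_shift[OF assms]])
  have "L - H + 1 \<in> \<int>" "L - H + 2 \<in> \<int>"
    using assms(2) by (auto intro: Ints_add)
  then have "L + 1 - H \<in> \<int>" "L + 2 - H \<in> \<int>"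
    by (simp_all add: diff_add_eq)
  then show "(L + 1) * rinv (L + 1) = 1" "rinv (L + 2) * (L + 2) = 1"
    by (simp_all add: shift_inverse)
qed

lemma x_Smat:
  assumes "c \<in> {1..n}" "L - H \<in> \<int>"
  shows "x c * Smat n etal etau bs as L = Smat n etal etau bs as (L + 1) * x c"
  using x_Rmat[OF assms(1)] assms(2) by (rule Smat_intertwine)

(* For bs = [] the truncated length gives Smat [] [a] = 0, so the reduction below starts at
   the empty monomial rather than at r = 1. *)
definition normal_form :: "nat \<Rightarrow> nat list \<Rightarrow> 'r" where
  "normal_form a bs = (\<Sum>cs\<in>words (length bs - 1).
     Smat n etal etau bs (a # cs) (H + of_nat (length bs - 1)) * prod_list (map x cs))"

lemma normal_form_Nil: "normal_form a [] = 0"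
  by (simp add: normal_form_def)

lemma x_normal_form:
  assumes "c \<in> {1..n}" "bs \<noteq> []"
  shows "x c * normal_form e bs = (\<Sum>cs\<in>words (length bs - 1).
    Smat n etal etau bs (e # cs) (H + of_nat (length bs)) * (x c * prod_list (map x cs)))"
proof -
  have shift: "H + of_nat (length bs - 1) + 1 = H + of_nat (length bs)"
    using assms(2) by (cases bs) (simp_all add: add_ac)
  have "x c * Smat n etal etau bs (e # cs) (H + of_nat (length bs - 1))
      = Smat n etal etau bs (e # cs) (H + of_nat (length bs)) * x c" for cs
    unfolding shift[symmetric] by (rule x_Smat[OF assms(1)]) simp
  then show ?thesis
    unfolding normal_form_def by (simp add: sum_distrib_left mult.assoc[symmetric])
qed

lemma normal_form_Cons:
  assumes "set bs \<subseteq> {1..n}"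
  shows "normal_form a (b # bs) = kd a b * prod_list (map x bs)
    + (\<Sum>c\<in>{1..n}. \<Sum>e\<in>{1..n}. Rmat etal etau b e a c H * x c * normal_form e bs)"
proof (cases bs)
  case Nil
  have "words 0 = {[]}" by auto
  with Nil show ?thesis by (simp add: normal_form_def normal_form_Nil)
next
  case (Cons b2 bs')
  define m where "m = length bs"
  define K where "K = H + of_nat m"
  define P where "P cs = prod_list (map x cs)" for cs
  define R where "R c e = Rmat etal etau b e a c H" for c e
  define T where "T cs = (\<Sum>e\<in>{1..n}. R (hd cs) e * Smat n etal etau bs (e # tl cs) K)" for cs
  have m: "m = Suc (length bs')" unfolding m_def Cons by simp
  have Smat_rec: "Smat n etal etau (b # bs) (a # cs) K = of_bool (a # cs = b # bs) + T cs"
    if "cs \<in> words m" for cs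
  proof -
    have "length cs = Suc (length bs')"
      using that m by simp
    then obtain c cs' where cs: "cs = c # cs'" and "length cs' = length bs'"
      by (cases cs) auto
    then have "Smat n etal etau (b # b2 # bs') (a # c # cs') (H + of_nat (Suc (length bs')))
      = of_bool (a # c # cs' = b # b2 # bs') + (\<Sum>e\<in>{1..n}. Rmat etal etau b e a c H
          * Smat n etal etau (b2 # bs') (e # cs') (H + of_nat (Suc (length bs'))))"
      by (intro Smat_Cons_Cons_shifted)
    then show ?thesis
      unfolding Cons K_def m cs T_def R_def by (simp del: Smat.simps)
  qed
  have delta: "(\<Sum>cs\<in>words m. of_bool (a # cs = b # bs) * P cs) = kd a b * P bs"
    using assms finite_words by (simp add: m_def kd_def)
  have "(\<Sum>cs\<in>words m. T cs * P cs)
      = (\<Sum>c\<in>{1..n}. \<Sum>cs\<in>words (m - 1). \<Sum>e\<in>{1..n}.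
           R c e * Smat n etal etau bs (e # cs) K * (x c * P cs))"
    unfolding m T_def by (simp add: sum_words_Suc P_def sum_distrib_right)
  also have "\<dots> = (\<Sum>c\<in>{1..n}. \<Sum>e\<in>{1..n}. R c e * x c * normal_form e bs)"
    using Cons unfolding m_def K_def P_def
    by (simp add: x_normal_form sum_distrib_left mult.assoc) (rule sum.cong[OF refl sum.swap])
  finally have Rmat_part: "(\<Sum>cs\<in>words m. T cs * P cs)
    = (\<Sum>c\<in>{1..n}. \<Sum>e\<in>{1..n}. R c e * x c * normal_form e bs)" .
  have "normal_form a (b # bs) = (\<Sum>cs\<in>words m. Smat n etal etau (b # bs) (a # cs) K * P cs)"
    unfolding normal_form_def m_def K_def P_def by simp
  also have "\<dots> = (\<Sum>cs\<in>words m. of_bool (a # cs = b # bs) * P cs) + (\<Sum>cs\<in>words m. T cs * P cs)"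
    unfolding sum.distrib[symmetric] distrib_right[symmetric] by (rule sum.cong) (simp_all add: Smat_rec)
  also have "\<dots> = kd a b * P bs + (\<Sum>c\<in>{1..n}. \<Sum>e\<in>{1..n}. R c e * x c * normal_form e bs)"
    unfolding delta Rmat_part ..
  finally show ?thesis
    unfolding P_def R_def .
qed

lemma d_monomial_minus_normal_form_in_left_ideal:
  assumes "a \<in> {1..n}" "set bs \<subseteq> {1..n}"
  shows "d a * prod_list (map x bs) - normal_form a bs \<in> left_ideal_gen {1..n} d"
  using assms
proof (induction bs arbitrary: a)
  case Nil
  then show ?case
    by (simp add: normal_form_Nil left_ideal_gen_generator)
next
  case (Cons b bs)
  let ?R = "\<lambda>c e. Rmat etal etau b e a c H"
  have "d a * prod_list (map x (b # bs)) - normal_form a (b # bs)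
      = (\<Sum>c\<in>{1..n}. \<Sum>e\<in>{1..n}. ?R c e * x c * (d e * prod_list (map x bs) - normal_form e bs))"
    using Cons.prems
    by (simp add: normal_form_Cons d_x mult.assoc[symmetric] distrib_right sum_distrib_right
        right_diff_distrib sum_subtractf)
  also have "\<dots> \<in> left_ideal_gen {1..n} d"
    using Cons by (intro left_ideal_gen_sum left_ideal_gen_left_mult) simp_all
  finally show ?case .
qed

end

theorem mainTheorem11:
  fixes n :: nat
    and etal etau :: "nat \<Rightarrow> nat \<Rightarrow> 'r::ring_1"
    and x d :: "nat \<Rightarrow> 'r"
    and H :: 'r
  assumes n3: "n \<ge> 3"
    and etal_central: "\<forall>a b y. etal a b * y = y * etal a b"
    and etau_central: "\<forall>a b y. etau a b * y = y * etau a b"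
    and etal_sym: "\<forall>a\<in>{1..n}. \<forall>b\<in>{1..n}. etal a b = etal b a"
    and eta_inv: "\<forall>a\<in>{1..n}. \<forall>c\<in>{1..n}. (\<Sum>b\<in>{1..n}. etal a b * etau b c) = kd a c"
    and H_inv: "\<forall>k::int. \<exists>z. (H + of_int k) * z = 1 \<and> z * (H + of_int k) = 1"
    and x_H: "\<forall>a\<in>{1..n}. x a * H = (H + 1) * x a"
    and d_H: "\<forall>a\<in>{1..n}. d a * H = (H - 1) * d a"
    and x_comm: "\<forall>a\<in>{1..n}. \<forall>b\<in>{1..n}. x a * x b = x b * x a"
    and d_comm: "\<forall>a\<in>{1..n}. \<forall>b\<in>{1..n}. d a * d b = d b * d a"
    and d_x: "\<forall>a\<in>{1..n}. \<forall>b\<in>{1..n}.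
               d a * x b = kd a b
                 + (\<Sum>c\<in>{1..n}. \<Sum>e\<in>{1..n}. Rmat etal etau b e a c H * x c * d e)"
  shows "\<forall>r \<ge> 1. \<forall>a1\<in>{1..n}. \<forall>bs. length bs = r \<and> set bs \<subseteq> {1..n} \<longrightarrow>
           (\<exists>y :: nat \<Rightarrow> 'r.
              d a1 * prod_list (map x bs)
              - (\<Sum>cs\<in>{cs. length cs = r - 1 \<and> set cs \<subseteq> {1..n}}.
                    Smat n etal etau bs (a1 # cs) (H + of_nat (r - 1)) * prod_list (map x cs))
              = (\<Sum>a\<in>{1..n}. y a * d a))"
proof -
  interpret dynamical_Weyl n etal etau x d H
    using etal_central etau_central H_inv x_H d_x by unfold_locales blast+
  show ?thesis
  proof (intro allI impI ballI)
    fix r a1 bs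
    assume "a1 \<in> {1..n}" and bs: "length bs = r \<and> set bs \<subseteq> {1..n}"
    then have "d a1 * prod_list (map x bs) - normal_form a1 bs \<in> left_ideal_gen {1..n} d"
      by (intro d_monomial_minus_normal_form_in_left_ideal) simp_all
    with bs show "\<exists>y. d a1 * prod_list (map x bs)
        - (\<Sum>cs\<in>words (r - 1). Smat n etal etau bs (a1 # cs) (H + of_nat (r - 1)) * prod_list (map x cs))
        = (\<Sum>a\<in>{1..n}. y a * d a)"
      unfolding normal_form_def left_ideal_gen_def by (simp del: of_nat_diff)
  qed
qed

end
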